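(* Let $H:\mathbb{R}^3\to\mathbb{R}^3$ be the diffeomorphism $H(x,y,z) = (1.76 - y^2 - 0.1 z,\ x,\ y)$. Let $B=[-1,1]^3$ and let \[ a = \begin{bmatrix} 0.81 \\ 1.0225 \\ 0.975 \end{bmatrix} + \begin{bmatrix} 0 & 0.19 & -0.03 \\ 0.1825 & 0 & 0 \\ 0 & -0.095 & -0.06 \end{bmatrix} B, \qquad b = \begin{bmatrix} 0.81 \\ 1.4875 \\ 0.975 \end{bmatrix} + \begin{bmatrix} 0 & 0.19 & -0.03 \\ 0.1225 & 0 & 0 \\ 0 & -0.095 & -0.06 \end{bmatrix} B . \] Then $H^4$ is uniformly hyperbolic on the compact invariant set $I=\operatorname{Inv}_{H^4}(a\cup b)=\{x\in a\cup b: H^{4n}(x)\in a\cup b \text{ for all } n\in\mathbb{Z}\}$.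
   Context: A diffeomorphism $f:\mathbb{R}^n\to\mathbb{R}^n$ is uniformly hyperbolic on a compact $f$-invariant set $I$ if for every $x\in I$ there is a splitting $\mathbb{R}^n=E^u_x\oplus E^s_x$ with $Df(x)E^u_x=E^u_{f(x)}$ and $Df(x)E^s_x=E^s_{f(x)}$, and there are constants $c>0$, $0<\lambda<1$ independent of $x$ such that for all $k\ge 0$: $\|Df^k(x)v\|<c\lambda^k\|v\|$ for all $v\in E^s_x$, and $\|Df^{-k}(x)v\|<c\lambda^k\|v\|$ for all $v\in E^u_x$. *)

theory Defs
  imports "HOL-Analysis.Analysis"
begin

definition iter_int :: "('a \<Rightarrow> 'a) \<Rightarrow> int \<Rightarrow> 'a \<Rightarrow> 'a" where
  "iter_int f n = (if 0 \<le> n then f ^^ nat n else (inv f) ^^ nat (- n))"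

definition Inv :: "('a \<Rightarrow> 'a) \<Rightarrow> 'a set \<Rightarrow> 'a set" where
  "Inv f N = {x \<in> N. \<forall>n::int. iter_int f n x \<in> N}"

definition unif_hyperbolic :: "('a::euclidean_space \<Rightarrow> 'a) \<Rightarrow> 'a set \<Rightarrow> bool" where
  "unif_hyperbolic f I \<longleftrightarrow>
     compact I \<and> f ` I = I \<and>
     (\<forall>x\<in>I. \<forall>k. (f ^^ k) differentiable (at x) \<and> ((inv f) ^^ k) differentiable (at x)) \<and>
     (\<exists>Eu Es c lam. c > 0 \<and> 0 < lam \<and> lam < (1::real) \<and>
       (\<forall>x\<in>I.
          subspace (Eu x) \<and> subspace (Es x) \<and> Eu x \<inter> Es x = {0} \<and>
          (\<forall>w. \<exists>u\<in>Eu x. \<exists>s\<in>Es x. w = u + s) \<and>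
          frechet_derivative f (at x) ` Eu x = Eu (f x) \<and>
          frechet_derivative f (at x) ` Es x = Es (f x) \<and>
          (\<forall>k::nat. \<forall>v\<in>Es x. v \<noteq> 0 \<longrightarrow>
             norm (frechet_derivative (f ^^ k) (at x) v) < c * lam ^ k * norm v) \<and>
          (\<forall>k::nat. \<forall>v\<in>Eu x. v \<noteq> 0 \<longrightarrow>
             norm (frechet_derivative ((inv f) ^^ k) (at x) v) < c * lam ^ k * norm v)))"

definition H :: "real^3 \<Rightarrow> real^3" where
  "H p = vector [1.76 - (p$2)^2 - 0.1 * p$3, p$1, p$2]"

definition cubeB :: "(real^3) set" where
  "cubeB = {u. \<forall>i. \<bar>u$i\<bar> \<le> 1}"

definition box_a :: "(real^3) set" where
  "box_a = (\<lambda>u. vector [0.81, 1.0225, 0.975] +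
      (vector [vector [0, 0.19, -0.03], vector [0.1825, 0, 0], vector [0, -0.095, -0.06]]
        :: real^3^3) *v u) ` cubeB"

definition box_b :: "(real^3) set" where
  "box_b = (\<lambda>u. vector [0.81, 1.4875, 0.975] +
      (vector [vector [0, 0.19, -0.03], vector [0.1225, 0, 0], vector [0, -0.095, -0.06]]
        :: real^3^3) *v u) ` cubeB"

end

theory Submission
  imports Defs
begin

text \<open>
  A cone-field argument. On a coordinate box containing \<open>a \<union> b\<close>, write a tangent vector
  \<open>v\<close> at \<open>p\<close> through the two quantities \<open>N = max |v\<^sub>1| |p\<^sub>2 v\<^sub>2|\<close> and
  \<open>Q = |5 (v\<^sub>3 + v\<^sub>1 / (2 p\<^sub>3))|\<close>. Explicit estimates on the derivative of \<open>H\<^sup>4\<close> show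
  that on the cone \<open>Q \<le> N\<close> the quantity \<open>N\<close> grows by the factor \<open>21/20\<close>, while \<open>Q\<close>
  of the image is always at most \<open>20/21\<close> times \<open>max N Q\<close>. Hence vectors with bounded
  forward (backward) orbit under the derivative stay in the complementary (respectively the
  same) cone and decay like \<open>(20/21)\<^sup>k\<close>; they form the stable and unstable subspaces.
  These meet only in \<open>0\<close>, and a compactness argument produces a nonzero stable vector and
  unstable vectors with any prescribed value of \<open>(v\<^sub>1, p\<^sub>2 v\<^sub>2)\<close>, so by a dimension
  count \<open>2 + 1 = 3\<close> they span.
\<close>

fun iterate_derivative :: "('a \<Rightarrow> 'a) \<Rightarrow> ('a \<Rightarrow> 'a \<Rightarrow> 'a) \<Rightarrow> nat \<Rightarrow> 'a \<Rightarrow> 'a \<Rightarrow> 'a" where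
  "iterate_derivative f Df 0 x = id"
| "iterate_derivative f Df (Suc k) x = Df ((f ^^ k) x) \<circ> iterate_derivative f Df k x"

lemma iterate_derivative_add:
  "iterate_derivative f Df (m + k) x =
     iterate_derivative f Df k ((f ^^ m) x) \<circ> iterate_derivative f Df m x"
  by (induction k) (auto simp: add.commute[of m] funpow_add)

lemma iterate_derivative_Suc_left:
  "iterate_derivative f Df (Suc k) x v = iterate_derivative f Df k (f x) (Df x v)"
  using iterate_derivative_add[of f Df 1 k x] by simp

lemma linear_iterate_derivative:
  assumes "\<And>x. linear (Df x)"
  shows "linear (iterate_derivative f Df k x)"
  by (induction k) (simp_all only: iterate_derivative.simps linear_id linear_compose assms)

lemma has_derivative_funpow:
  assumes "\<And>x. (f has_derivative Df x) (at x)"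
  shows "((f ^^ k) has_derivative iterate_derivative f Df k x) (at x)"
proof (induction k)
  case 0
  show ?case by (simp add: id_def)
next
  case (Suc k)
  show ?case
    using has_derivative_compose[OF Suc.IH assms] by (simp add: o_def)
qed

lemma funpow_left_inverse:
  fixes f g :: "'a \<Rightarrow> 'a"
  assumes "\<And>x. g (f x) = x"
  shows "(g ^^ n) ((f ^^ n) x) = x"
proof (induction n arbitrary: x)
  case (Suc n)
  have "(g ^^ Suc n) ((f ^^ Suc n) x) = (g ^^ n) (g (f ((f ^^ n) x)))"
    by (simp add: funpow_swap1)
  then show ?case using Suc.IH assms by simp
qed simp

lemma continuous_on_funpow:
  fixes f :: "'a::topological_space \<Rightarrow> 'a"
  assumes "continuous_on UNIV f"
  shows "continuous_on UNIV (f ^^ n)"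
proof (induction n)
  case 0
  have "f ^^ 0 = (\<lambda>x. x)" by auto
  then show ?case by simp
next
  case (Suc n)
  have "f ^^ Suc n = (\<lambda>x. f ((f ^^ n) x))" by auto
  then show ?case
    using continuous_on_compose2[OF assms Suc.IH] by simp
qed

lemma linear_inj_imp_surj:
  fixes f :: "'a::euclidean_space \<Rightarrow> 'b::euclidean_space"
  assumes "linear f" "inj f" "DIM('a) = DIM('b)"
  shows "surj f"
  using assms by (metis dim_UNIV linear_injective_imp_surjective)

lemma subspace_Bseq:
  fixes A :: "nat \<Rightarrow> 'a::real_normed_vector \<Rightarrow> 'b::real_normed_vector"
  assumes lin: "\<And>k. linear (A k)"
  shows "subspace {v. Bseq (\<lambda>k. A k v)}"
proof -
  have add: "Bseq (\<lambda>k. A k (u + v))" if u: "Bseq (\<lambda>k. A k u)" and v: "Bseq (\<lambda>k. A k v)" for u v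
  proof -
    obtain K L where "\<forall>k. norm (A k u) \<le> K" "\<forall>k. norm (A k v) \<le> L"
      using u v by (meson BseqE)
    then have "norm (A k (u + v)) \<le> K + L" for k
      by (simp add: linear_add[OF lin] norm_triangle_le add_mono)
    then show ?thesis by (rule BseqI')
  qed
  have scale: "Bseq (\<lambda>k. A k (c *\<^sub>R v))" if v: "Bseq (\<lambda>k. A k v)" for c v
  proof -
    obtain K where "\<forall>k. norm (A k v) \<le> K"
      using v by (meson BseqE)
    then have "norm (A k (c *\<^sub>R v)) \<le> \<bar>c\<bar> * K" for k
      by (simp add: linear_scale[OF lin] mult_left_mono)
    then show ?thesis by (rule BseqI')
  qed
  show ?thesis
    unfolding subspace_def using add scale by (simp add: linear_0[OF lin])
qed

lemma iter_int_shift: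
  assumes "bij f"
  shows "iter_int f n (f x) = iter_int f (n + 1) x"
proof (cases "0 \<le> n")
  case True
  then have "nat (n + 1) = Suc (nat n)" by simp
  with True show ?thesis by (simp add: iter_int_def funpow_swap1)
next
  case False
  define m where "m = nat (- n - 1)"
  have n: "n = - int (Suc m)"
    using False unfolding m_def by simp
  have neg: "iter_int f (- int k) = inv f ^^ k" for k
    by (cases "k = 0") (simp_all add: iter_int_def)
  have "n + 1 = - int m" "inv f (f x) = x"
    using n assms by (simp_all add: bij_is_inj)
  then show ?thesis
    by (simp only: n neg funpow_Suc_right o_apply)
qed

lemma Inv_iff: "x \<in> Inv f S \<longleftrightarrow> (\<forall>n. iter_int f n x \<in> S)"
proof -
  have "iter_int f 0 x = x"
    by (simp add: iter_int_def)
  then have "(\<forall>n. iter_int f n x \<in> S) \<Longrightarrow> x \<in> S"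
    by metis
  then show ?thesis
    unfolding Inv_def by blast
qed

lemma Inv_subset: "Inv f S \<subseteq> S"
  by (auto simp: Inv_def)

lemma f_in_Inv:
  assumes "bij f" "x \<in> Inv f S"
  shows "f x \<in> Inv f S"
  using assms by (simp add: Inv_iff iter_int_shift)

lemma inv_in_Inv:
  assumes "bij f" "x \<in> Inv f S"
  shows "inv f x \<in> Inv f S"
proof -
  have "iter_int f n (inv f x) = iter_int f (n - 1) x" for n
    using iter_int_shift[OF assms(1), of "n - 1" "inv f x"] assms(1)
    by (simp add: bij_is_surj surj_f_inv_f)
  then show ?thesis
    using assms(2) by (simp add: Inv_iff)
qed

lemma compact_Inv:
  fixes S :: "'a::t2_space set"
  assumes "compact S" "continuous_on UNIV f" "continuous_on UNIV (inv f)"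
  shows "compact (Inv f S)"
proof -
  have "continuous_on UNIV (iter_int f n)" for n
    unfolding iter_int_def by (simp add: continuous_on_funpow assms(2,3))
  then have "closed (iter_int f n -` S)" for n
    using continuous_on_closed_vimage[of UNIV "iter_int f n"] compact_imp_closed[OF assms(1)] by simp
  moreover have "Inv f S = S \<inter> (\<Inter>n. iter_int f n -` S)"
    unfolding Inv_def by auto
  ultimately show ?thesis
    using compact_Int_closed[OF assms(1)] by (simp add: closed_INT)
qed

section \<open>Cone fields\<close>

locale cone_field =
  fixes f :: "'a::euclidean_space \<Rightarrow> 'a" and Df :: "'a \<Rightarrow> 'a \<Rightarrow> 'a" and J :: "'a set"
    and a b :: "'a \<Rightarrow> 'a \<Rightarrow> real" and lam C :: real
  assumes maps_to: "x \<in> J \<Longrightarrow> f x \<in> J"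
    and linear_Df: "linear (Df x)"
    and a_nonneg: "0 \<le> a x v" and b_nonneg: "0 \<le> b x v"
    and continuous_a: "continuous_on UNIV (a x)" and continuous_b: "continuous_on UNIV (b x)"
    and norm_le_max: "x \<in> J \<Longrightarrow> norm v \<le> C * max (a x v) (b x v)"
    and a_le_norm: "x \<in> J \<Longrightarrow> a x v \<le> C * norm v"
    and b_le_norm: "x \<in> J \<Longrightarrow> b x v \<le> C * norm v"
    and lam_gt_1: "1 < lam"
    and expanding_cone: "x \<in> J \<Longrightarrow> b x v \<le> a x v \<Longrightarrow>
      lam * a x v \<le> a (f x) (Df x v) \<and> b (f x) (Df x v) \<le> a (f x) (Df x v)"
    and contracting_cone: "x \<in> J \<Longrightarrow> a (f x) (Df x v) \<le> b (f x) (Df x v) \<Longrightarrow>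
      a x v \<le> b x v \<and> lam * b (f x) (Df x v) \<le> b x v"
begin

abbreviation D :: "nat \<Rightarrow> 'a \<Rightarrow> 'a \<Rightarrow> 'a" where
  "D \<equiv> iterate_derivative f Df"

definition bounded_orbit :: "'a \<Rightarrow> 'a set" where
  "bounded_orbit x = {v. Bseq (\<lambda>k. D k x v)}"

lemma funpow_maps_to: "x \<in> J \<Longrightarrow> (f ^^ k) x \<in> J"
  by (induction k) (simp_all add: maps_to)

lemma linear_D: "linear (D k x)"
  by (rule linear_iterate_derivative[OF linear_Df])

lemma continuous_on_D: "continuous_on UNIV (D k x)"
  using linear_D linear_conv_bounded_linear linear_continuous_on by blast

lemma C_pos:
  assumes "x \<in> J"
  shows "0 < C"
proof -
  obtain e :: 'a where "norm e = 1"
    using vector_choose_size zero_le_one by blast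
  then have "0 < C * max (a x e) (b x e)"
    using norm_le_max[OF assms, of e] by linarith
  then show ?thesis
    using a_nonneg[of x e] by (auto simp: zero_less_mult_iff)
qed

lemma a_zero: "x \<in> J \<Longrightarrow> a x 0 = 0"
  using a_le_norm[of x 0] a_nonneg[of x 0] by simp

lemma b_zero: "x \<in> J \<Longrightarrow> b x 0 = 0"
  using b_le_norm[of x 0] b_nonneg[of x 0] by simp

lemma norm_le_b: "x \<in> J \<Longrightarrow> a x v \<le> b x v \<Longrightarrow> norm v \<le> C * b x v"
  using norm_le_max[of x v] by (simp add: max_def)

lemma expanding_cone_iterate:
  assumes "x \<in> J" "b x v \<le> a x v"
  shows "b ((f ^^ k) x) (D k x v) \<le> a ((f ^^ k) x) (D k x v) \<and>
    lam ^ k * a x v \<le> a ((f ^^ k) x) (D k x v)"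
proof (induction k)
  case 0
  show ?case using assms(2) by simp
next
  case (Suc k)
  let ?y = "(f ^^ k) x" and ?w = "D k x v"
  have step: "lam * a ?y ?w \<le> a (f ?y) (Df ?y ?w) \<and> b (f ?y) (Df ?y ?w) \<le> a (f ?y) (Df ?y ?w)"
    using expanding_cone[OF funpow_maps_to[OF assms(1)]] Suc.IH by blast
  have "lam ^ Suc k * a x v \<le> lam * a ?y ?w"
    using Suc.IH lam_gt_1 by (simp add: mult.assoc)
  with step show ?case
    by simp
qed

lemma contracting_cone_step_back:
  assumes "x \<in> J" "a ((f ^^ Suc k) x) (D (Suc k) x v) \<le> b ((f ^^ Suc k) x) (D (Suc k) x v)"
  shows "a ((f ^^ k) x) (D k x v) \<le> b ((f ^^ k) x) (D k x v)"
  using contracting_cone[OF funpow_maps_to[OF assms(1)]] assms(2)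
  by simp

lemma contracting_cone_backward:
  assumes "x \<in> J" "j \<le> k" "a ((f ^^ k) x) (D k x v) \<le> b ((f ^^ k) x) (D k x v)"
  shows "a ((f ^^ j) x) (D j x v) \<le> b ((f ^^ j) x) (D j x v)"
  using assms(2,3)
  by (induction j rule: inc_induct) (auto intro: contracting_cone_step_back[OF assms(1)])

lemma contracting_cone_iterate:
  assumes "x \<in> J" "a ((f ^^ k) x) (D k x v) \<le> b ((f ^^ k) x) (D k x v)"
  shows "lam ^ k * b ((f ^^ k) x) (D k x v) \<le> b x v"
  using assms(2)
proof (induction k)
  case 0
  then show ?case by simp
next
  case (Suc k)
  let ?y = "(f ^^ k) x" and ?w = "D k x v"
  have "a ?y ?w \<le> b ?y ?w \<and> lam * b (f ?y) (Df ?y ?w) \<le> b ?y ?w"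
    using contracting_cone[OF funpow_maps_to[OF assms(1)]] Suc.prems
    by simp
  moreover from this have "lam ^ k * b ?y ?w \<le> b x v"
    using Suc.IH by blast
  moreover have "lam ^ k * (lam * b (f ?y) (Df ?y ?w)) \<le> lam ^ k * b ?y ?w"
    using calculation(1) lam_gt_1 by (simp add: mult_left_mono)
  ultimately show ?case
    by (simp add: mult.assoc mult.left_commute)
qed

lemma contracting_cone_b_decreasing:
  assumes "x \<in> J" "a ((f ^^ k) x) (D k x v) \<le> b ((f ^^ k) x) (D k x v)"
  shows "b ((f ^^ k) x) (D k x v) \<le> b x v"
proof -
  have "b ((f ^^ k) x) (D k x v) \<le> lam ^ k * b ((f ^^ k) x) (D k x v)"
    using one_le_power[of lam k] lam_gt_1 b_nonneg[of "(f ^^ k) x" "D k x v"]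
    by (simp add: mult_le_cancel_right1)
  then show ?thesis
    using contracting_cone_iterate[OF assms] by linarith
qed

lemma subspace_bounded_orbit: "subspace (bounded_orbit x)"
  unfolding bounded_orbit_def by (rule subspace_Bseq[OF linear_D])

lemma Df_mem_bounded_orbit_iff: "Df x v \<in> bounded_orbit (f x) \<longleftrightarrow> v \<in> bounded_orbit x"
  unfolding bounded_orbit_def mem_Collect_eq iterate_derivative_Suc_left[symmetric]
  by (rule Bseq_Suc_iff)

lemma D_mem_bounded_orbit: "v \<in> bounded_orbit x \<Longrightarrow> D k x v \<in> bounded_orbit ((f ^^ k) x)"
  by (induction k) (simp_all add: Df_mem_bounded_orbit_iff)

lemma bounded_orbit_contracting:
  assumes x: "x \<in> J" and v: "v \<in> bounded_orbit x" "v \<noteq> 0"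
  shows "a x v < b x v"
proof (rule ccontr)
  assume "\<not> a x v < b x v"
  then have cone: "b x v \<le> a x v" by simp
  have "0 < a x v"
  proof (rule ccontr)
    assume "\<not> 0 < a x v"
    then have "a x v = 0" "b x v = 0"
      using cone a_nonneg[of x v] b_nonneg[of x v] by linarith+
    then show False
      using norm_le_max[OF x, of v] v(2) by simp
  qed
  obtain K where K: "\<And>k. norm (D k x v) \<le> K"
    using v(1) unfolding bounded_orbit_def mem_Collect_eq by (meson BseqE)
  obtain n where n: "C * K / a x v < lam ^ n"
    using real_arch_pow[OF lam_gt_1] by blast
  have "lam ^ n * a x v \<le> a ((f ^^ n) x) (D n x v)"
    using expanding_cone_iterate[OF x cone] by blast
  also have "\<dots> \<le> C * norm (D n x v)"
    using a_le_norm[OF funpow_maps_to[OF x]] .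
  also have "\<dots> \<le> C * K"
    using K C_pos[OF x] by (simp add: mult_left_mono)
  finally show False
    using n \<open>0 < a x v\<close> by (simp add: pos_divide_less_eq)
qed

lemma bounded_orbit_in_contracting_cone:
  assumes x: "x \<in> J" and v: "v \<in> bounded_orbit x"
  shows "a ((f ^^ k) x) (D k x v) \<le> b ((f ^^ k) x) (D k x v)"
proof (cases "D k x v = 0")
  case True
  then show ?thesis using funpow_maps_to[OF x] by (simp add: a_zero b_zero)
next
  case False
  then show ?thesis
    using bounded_orbit_contracting[OF funpow_maps_to[OF x] D_mem_bounded_orbit[OF v, of k]]
    by (simp add: less_imp_le)
qed

lemma bounded_orbit_decay:
  assumes x: "x \<in> J" and v: "v \<in> bounded_orbit x" "v \<noteq> 0"
  shows "norm (D k x v) < (C\<^sup>2 + 1) * (1 / lam) ^ k * norm v"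
proof -
  let ?y = "(f ^^ k) x"
  have cone: "a ?y (D k x v) \<le> b ?y (D k x v)"
    by (rule bounded_orbit_in_contracting_cone[OF x v(1)])
  have "lam ^ k * b ?y (D k x v) \<le> C * norm v"
    using contracting_cone_iterate[OF x cone] b_le_norm[OF x, of v] by linarith
  then have b_le: "b ?y (D k x v) \<le> C * (1 / lam) ^ k * norm v"
    using lam_gt_1 by (simp add: field_simps)
  have "norm (D k x v) \<le> C * b ?y (D k x v)"
    by (rule norm_le_b[OF funpow_maps_to[OF x] cone])
  also have "\<dots> \<le> C\<^sup>2 * (1 / lam) ^ k * norm v"
    using b_le C_pos[OF x] by (simp add: power2_eq_square mult_left_mono mult.assoc)
  also have "\<dots> < (C\<^sup>2 + 1) * (1 / lam) ^ k * norm v"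
    using v(2) lam_gt_1 by (simp add: distrib_right)
  finally show ?thesis .
qed

lemma bounded_orbit_exists:
  assumes x: "x \<in> J" and S: "closed S" "\<And>v. v \<in> S \<Longrightarrow> b x v \<le> R"
    and reach: "\<And>n. \<exists>v\<in>S. a ((f ^^ n) x) (D n x v) \<le> b ((f ^^ n) x) (D n x v)"
  shows "\<exists>v\<in>S. v \<in> bounded_orbit x"
proof -
  define K where "K n = S \<inter> (\<Inter>j\<in>{..n}. {v. a ((f ^^ j) x) (D j x v) \<le> b ((f ^^ j) x) (D j x v)})"
    for n
  have "closed (K n)" for n
    unfolding K_def using S(1)
    by (intro closed_Int closed_INT ballI closed_Collect_le continuous_on_compose2[OF continuous_a]
        continuous_on_compose2[OF continuous_b] continuous_on_D) auto
  moreover have "K n \<noteq> {}" for n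
    using reach[of n] contracting_cone_backward[OF x] unfolding K_def by blast
  moreover have "K n \<subseteq> K m" if "m \<le> n" for m n
    using that unfolding K_def by auto
  moreover have "bounded (K 0)"
  proof -
    have "norm v \<le> C * R" if "v \<in> K 0" for v
      using that norm_le_b[OF x, of v] S(2)[of v] C_pos[OF x] unfolding K_def
      by (force intro: order_trans mult_left_mono)
    then show ?thesis unfolding bounded_iff by blast
  qed
  ultimately obtain v where v: "\<And>n. v \<in> K n"
    by (metis bounded_closed_nest)
  have "norm (D k x v) \<le> C * R" for k
  proof -
    have cone: "a ((f ^^ k) x) (D k x v) \<le> b ((f ^^ k) x) (D k x v)"
      using v[of k] unfolding K_def by blast
    have "norm (D k x v) \<le> C * b ((f ^^ k) x) (D k x v)"
      by (rule norm_le_b[OF funpow_maps_to[OF x] cone])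
    also have "\<dots> \<le> C * R"
      using contracting_cone_b_decreasing[OF x cone] S(2)[of v] v[of 0] C_pos[OF x]
      unfolding K_def by (simp add: mult_left_mono)
    finally show ?thesis .
  qed
  then have "v \<in> bounded_orbit x"
    unfolding bounded_orbit_def mem_Collect_eq by (rule BseqI')
  then show ?thesis
    using v[of 0] unfolding K_def by blast
qed

end

section \<open>Uniform hyperbolicity from a pair of cone fields\<close>

locale cone_hyperbolic =
  fixes F G :: "'a::euclidean_space \<Rightarrow> 'a" and DF DG :: "'a \<Rightarrow> 'a \<Rightarrow> 'a" and I :: "'a set"
    and P :: "'a \<Rightarrow> 'a \<Rightarrow> 'b::euclidean_space" and l :: "'a \<Rightarrow> 'a \<Rightarrow> real"
    and lam C :: real
  assumes F_G: "F (G x) = x" and G_F: "G (F x) = x"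
    and F_deriv: "(F has_derivative DF x) (at x)" and G_deriv: "(G has_derivative DG x) (at x)"
    and F_maps_to: "x \<in> I \<Longrightarrow> F x \<in> I" and G_maps_to: "x \<in> I \<Longrightarrow> G x \<in> I"
    and linear_P: "linear (P x)" and linear_l: "linear (l x)"
    and dim_split: "DIM('b) + 1 = DIM('a)"
    and lam_gt_1: "1 < lam"
    and norm_le_max: "x \<in> I \<Longrightarrow> norm v \<le> C * max (infnorm (P x v)) \<bar>l x v\<bar>"
    and P_le_norm: "x \<in> I \<Longrightarrow> infnorm (P x v) \<le> C * norm v"
    and l_le_norm: "x \<in> I \<Longrightarrow> \<bar>l x v\<bar> \<le> C * norm v"
    and expanding_cone: "x \<in> I \<Longrightarrow> \<bar>l x v\<bar> \<le> infnorm (P x v) \<Longrightarrow>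
      lam * infnorm (P x v) \<le> infnorm (P (F x) (DF x v))"
    and contracting_cone: "x \<in> I \<Longrightarrow>
      lam * \<bar>l (F x) (DF x v)\<bar> \<le> max (infnorm (P x v)) \<bar>l x v\<bar>"
begin

lemma DF_DG: "DF (G x) (DG x v) = v"
proof -
  have "((\<lambda>y. F (G y)) has_derivative (\<lambda>v. DF (G x) (DG x v))) (at x)"
    by (rule has_derivative_compose[OF G_deriv F_deriv])
  moreover have "((\<lambda>y. F (G y)) has_derivative (\<lambda>v. v)) (at x)"
    by (simp add: F_G)
  ultimately have "(\<lambda>v. DF (G x) (DG x v)) = (\<lambda>v. v)"
    by (rule has_derivative_unique)
  then show ?thesis by metis
qed

lemma DG_DF: "DG (F x) (DF x v) = v"
proof -
  have "((\<lambda>y. G (F y)) has_derivative (\<lambda>v. DG (F x) (DF x v))) (at x)"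
    by (rule has_derivative_compose[OF F_deriv G_deriv])
  moreover have "((\<lambda>y. G (F y)) has_derivative (\<lambda>v. v)) (at x)"
    by (simp add: G_F)
  ultimately have "(\<lambda>v. DG (F x) (DF x v)) = (\<lambda>v. v)"
    by (rule has_derivative_unique)
  then show ?thesis by metis
qed

lemma linear_DF: "linear (DF x)"
  using F_deriv by (rule has_derivative_linear)

lemma linear_DG: "linear (DG x)"
  using G_deriv by (rule has_derivative_linear)

lemma continuous_on_P: "continuous_on UNIV (P x)"
  using linear_P linear_conv_bounded_linear linear_continuous_on by blast

lemma continuous_on_l: "continuous_on UNIV (l x)"
  using linear_l linear_conv_bounded_linear linear_continuous_on by blast

lemma unstable_cone_step:
  assumes x: "x \<in> I" and cone: "\<bar>l x v\<bar> \<le> infnorm (P x v)"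
  shows "lam * infnorm (P x v) \<le> infnorm (P (F x) (DF x v)) \<and>
    \<bar>l (F x) (DF x v)\<bar> \<le> infnorm (P (F x) (DF x v))"
proof
  show expand: "lam * infnorm (P x v) \<le> infnorm (P (F x) (DF x v))"
    by (rule expanding_cone[OF x cone])
  have "lam * \<bar>l (F x) (DF x v)\<bar> \<le> infnorm (P x v)"
    using contracting_cone[OF x, of v] cone by simp
  moreover have "\<bar>l (F x) (DF x v)\<bar> \<le> lam * \<bar>l (F x) (DF x v)\<bar>"
    "infnorm (P x v) \<le> lam * infnorm (P x v)"
    using lam_gt_1 infnorm_pos_le[of "P x v"] by (simp_all add: mult_le_cancel_right1)
  ultimately show "\<bar>l (F x) (DF x v)\<bar> \<le> infnorm (P (F x) (DF x v))"
    using expand by linarith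
qed

lemma stable_cone_step:
  assumes x: "x \<in> I" and cone: "infnorm (P (F x) (DF x v)) \<le> \<bar>l (F x) (DF x v)\<bar>"
  shows "infnorm (P x v) \<le> \<bar>l x v\<bar> \<and> lam * \<bar>l (F x) (DF x v)\<bar> \<le> \<bar>l x v\<bar>"
proof -
  let ?N = "infnorm (P x v)" and ?Q' = "\<bar>l (F x) (DF x v)\<bar>"
  have "?N \<le> \<bar>l x v\<bar>"
  proof (rule ccontr)
    assume "\<not> ?N \<le> \<bar>l x v\<bar>"
    then have pos: "0 < ?N" and unstable: "\<bar>l x v\<bar> \<le> ?N"
      by auto
    have "lam * ?N \<le> ?Q'"
      using expanding_cone[OF x unstable] cone by linarith
    moreover have "lam * ?Q' \<le> ?N"
      using contracting_cone[OF x, of v] unstable by simp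
    ultimately have "lam * (lam * ?N) \<le> ?N"
      using lam_gt_1 by (smt (verit) mult_left_mono)
    moreover have "?N < lam * ?N" "lam * ?N < lam * (lam * ?N)"
      using pos lam_gt_1 by simp_all
    ultimately show False by linarith
  qed
  then show ?thesis
    using contracting_cone[OF x, of v] by simp
qed

sublocale forward: cone_field F DF I "\<lambda>x v. infnorm (P x v)" "\<lambda>x v. \<bar>l x v\<bar>" lam C
proof (rule cone_field.intro)
  fix x v
  show "continuous_on UNIV (\<lambda>v. infnorm (P x v))" "continuous_on UNIV (\<lambda>v. \<bar>l x v\<bar>)"
    by (intro continuous_on_infnorm continuous_on_rabs continuous_on_P continuous_on_l)+
  show "0 \<le> infnorm (P x v)" "0 \<le> \<bar>l x v\<bar>" "linear (DF x)" "1 < lam"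
    by (simp_all add: infnorm_pos_le linear_DF lam_gt_1)
  assume x: "x \<in> I"
  show "F x \<in> I"
    by (rule F_maps_to[OF x])
  show "norm v \<le> C * max (infnorm (P x v)) \<bar>l x v\<bar>" "infnorm (P x v) \<le> C * norm v"
    "\<bar>l x v\<bar> \<le> C * norm v"
    by (simp_all add: x norm_le_max P_le_norm l_le_norm)
  show "\<bar>l x v\<bar> \<le> infnorm (P x v) \<Longrightarrow>
      lam * infnorm (P x v) \<le> infnorm (P (F x) (DF x v)) \<and>
      \<bar>l (F x) (DF x v)\<bar> \<le> infnorm (P (F x) (DF x v))"
    by (rule unstable_cone_step[OF x])
  show "infnorm (P (F x) (DF x v)) \<le> \<bar>l (F x) (DF x v)\<bar> \<Longrightarrow>
      infnorm (P x v) \<le> \<bar>l x v\<bar> \<and> lam * \<bar>l (F x) (DF x v)\<bar> \<le> \<bar>l x v\<bar>"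
    by (rule stable_cone_step[OF x])
qed

text \<open>Running time backwards exchanges the roles of the two quantities.\<close>

sublocale backward: cone_field G DG I "\<lambda>x v. \<bar>l x v\<bar>" "\<lambda>x v. infnorm (P x v)" lam C
proof (rule cone_field.intro)
  fix x v
  show "continuous_on UNIV (\<lambda>v. infnorm (P x v))" "continuous_on UNIV (\<lambda>v. \<bar>l x v\<bar>)"
    by (intro continuous_on_infnorm continuous_on_rabs continuous_on_P continuous_on_l)+
  show "0 \<le> infnorm (P x v)" "0 \<le> \<bar>l x v\<bar>" "linear (DG x)" "1 < lam"
    by (simp_all add: infnorm_pos_le linear_DG lam_gt_1)
  assume x: "x \<in> I"
  show "G x \<in> I"
    by (rule G_maps_to[OF x])
  show "norm v \<le> C * max \<bar>l x v\<bar> (infnorm (P x v))" "infnorm (P x v) \<le> C * norm v"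
    "\<bar>l x v\<bar> \<le> C * norm v"
    using norm_le_max[OF x] by (simp_all add: x max.commute P_le_norm l_le_norm)
  show "infnorm (P x v) \<le> \<bar>l x v\<bar> \<Longrightarrow>
      lam * \<bar>l x v\<bar> \<le> \<bar>l (G x) (DG x v)\<bar> \<and>
      infnorm (P (G x) (DG x v)) \<le> \<bar>l (G x) (DG x v)\<bar>"
    using stable_cone_step[OF G_maps_to[OF x], of "DG x v"] by (simp add: F_G DF_DG)
  show "\<bar>l (G x) (DG x v)\<bar> \<le> infnorm (P (G x) (DG x v)) \<Longrightarrow>
      \<bar>l x v\<bar> \<le> infnorm (P x v) \<and> lam * infnorm (P (G x) (DG x v)) \<le> infnorm (P x v)"
    using unstable_cone_step[OF G_maps_to[OF x], of "DG x v"] by (simp add: F_G DF_DG)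
qed

abbreviation stable_space :: "'a \<Rightarrow> 'a set" where
  "stable_space \<equiv> forward.bounded_orbit"

abbreviation unstable_space :: "'a \<Rightarrow> 'a set" where
  "unstable_space \<equiv> backward.bounded_orbit"

lemma backward_D_forward_D: "backward.D n ((F ^^ n) y) (forward.D n y w) = w"
proof (induction n)
  case (Suc n)
  let ?z = "(F ^^ n) y"
  have "backward.D (Suc n) ((F ^^ Suc n) y) (forward.D (Suc n) y w) =
      backward.D n (G (F ?z)) (DG (F ?z) (DF ?z (forward.D n y w)))"
    unfolding iterate_derivative_Suc_left[of G DG n] iterate_derivative.simps(2)[of F DF n] by simp
  then show ?case
    using Suc.IH by (simp add: G_F DG_DF)
qed simp

lemma DF_image_eq:
  assumes "\<And>v. DF x v \<in> E' \<longleftrightarrow> v \<in> E"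
  shows "DF x ` E = E'"
proof -
  have "surj (DF x)"
    using DF_DG[of "F x"] by (intro surjI[of "DF x" "DG (F x)"]) (simp add: G_F)
  moreover have "E = DF x -` E'"
    using assms by auto
  ultimately show ?thesis
    by (simp add: surj_image_vimage_eq)
qed

lemma stable_space_image: "DF x ` stable_space x = stable_space (F x)"
  by (rule DF_image_eq) (rule forward.Df_mem_bounded_orbit_iff)

lemma unstable_space_image: "DF x ` unstable_space x = unstable_space (F x)"
  by (rule DF_image_eq)
    (use backward.Df_mem_bounded_orbit_iff[of "F x" "DF x _"] in \<open>simp add: G_F DG_DF\<close>)

lemma stable_Int_unstable:
  assumes x: "x \<in> I"
  shows "stable_space x \<inter> unstable_space x = {0}"
proof -
  have "v = 0" if "v \<in> stable_space x" "v \<in> unstable_space x" for v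
  proof (rule ccontr)
    assume "v \<noteq> 0"
    then show False
      using forward.bounded_orbit_contracting[OF x that(1)]
        backward.bounded_orbit_contracting[OF x that(2)] by simp
  qed
  moreover have "0 \<in> stable_space x" "0 \<in> unstable_space x"
    by (rule subspace_0[OF forward.subspace_bounded_orbit] subspace_0[OF backward.subspace_bounded_orbit])+
  ultimately show ?thesis
    by blast
qed

lemma exists_P_l_after_iterate:
  assumes y: "y \<in> I"
  shows "\<exists>v. P ((F ^^ n) y) (forward.D n y v) = \<beta> \<and> l y v = r"
proof -
  define \<Phi> where "\<Phi> v = (P ((F ^^ n) y) (forward.D n y v), l y v)" for v
  have "linear (\<lambda>v. P ((F ^^ n) y) (forward.D n y v))"
    using linear_compose[OF forward.linear_D linear_P] by (simp add: o_def)
  then have "bounded_linear \<Phi>"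
    unfolding \<Phi>_def using linear_l by (intro bounded_linear_Pair) (simp_all add: linear_conv_bounded_linear)
  then have lin: "linear \<Phi>"
    by (rule bounded_linear.linear)
  have "v = 0" if "\<Phi> v = 0" for v
  proof -
    have "P ((F ^^ n) y) (forward.D n y v) = 0" and l0: "l y v = 0"
      using that unfolding \<Phi>_def by (simp_all add: zero_prod_def)
    then have "lam ^ n * infnorm (P y v) \<le> 0"
      using forward.expanding_cone_iterate[OF y, of v n] infnorm_pos_le[of "P y v"] by (simp add: infnorm_0)
    then have "infnorm (P y v) = 0"
      using lam_gt_1 infnorm_pos_le[of "P y v"] by (smt (verit) mult_pos_pos zero_less_power)
    then show "v = 0"
      using norm_le_max[OF y, of v] l0 by simp
  qed
  then have "surj \<Phi>"
    using dim_split by (intro linear_inj_imp_surj lin) (auto simp: linear_inj_iff_eq_0[OF lin])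
  then obtain v where "\<Phi> v = (\<beta>, r)"
    by (metis surjD)
  then show ?thesis
    unfolding \<Phi>_def by blast
qed

lemma stable_space_nontrivial:
  assumes x: "x \<in> I"
  shows "\<exists>s\<in>stable_space x. s \<noteq> 0"
proof -
  have "\<exists>v\<in>{v. l x v = 1}. v \<in> stable_space x"
  proof (rule forward.bounded_orbit_exists[OF x])
    show "closed {v. l x v = 1}"
      by (intro closed_Collect_eq continuous_on_l continuous_on_const)
    show "\<bar>l x v\<bar> \<le> 1" if "v \<in> {v. l x v = 1}" for v
      using that by simp
    show "\<exists>v\<in>{v. l x v = 1}. infnorm (P ((F ^^ n) x) (forward.D n x v))
        \<le> \<bar>l ((F ^^ n) x) (forward.D n x v)\<bar>" for n
    proof -
      obtain v where "P ((F ^^ n) x) (forward.D n x v) = 0" "l x v = 1"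
        using exists_P_l_after_iterate[OF x] by blast
      then show ?thesis
        by (intro bexI[of _ v]) (simp_all add: infnorm_0)
    qed
  qed
  then obtain v where "v \<in> stable_space x" "l x v = 1"
    by blast
  moreover have "v \<noteq> 0"
    using \<open>l x v = 1\<close> linear_0[OF linear_l] by auto
  ultimately show ?thesis
    by blast
qed

lemma unstable_space_onto:
  assumes x: "x \<in> I"
  shows "\<exists>u\<in>unstable_space x. P x u = \<beta>"
proof -
  have "\<exists>u\<in>{u. P x u = \<beta>}. u \<in> unstable_space x"
  proof (rule backward.bounded_orbit_exists[OF x])
    show "closed {u. P x u = \<beta>}"
      by (intro closed_Collect_eq continuous_on_P continuous_on_const)
    show "infnorm (P x u) \<le> infnorm \<beta>" if "u \<in> {u. P x u = \<beta>}" for u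
      using that by simp
    show "\<exists>u\<in>{u. P x u = \<beta>}. \<bar>l ((G ^^ n) x) (backward.D n x u)\<bar>
        \<le> infnorm (P ((G ^^ n) x) (backward.D n x u))" for n
    proof -
      let ?y = "(G ^^ n) x"
      have Fy: "(F ^^ n) ?y = x"
        by (rule funpow_left_inverse[of F G, OF F_G])
      obtain w where w: "P ((F ^^ n) ?y) (forward.D n ?y w) = \<beta>" "l ?y w = 0"
        using exists_P_l_after_iterate[OF backward.funpow_maps_to[OF x]] by blast
      have "backward.D n x (forward.D n ?y w) = w"
        using backward_D_forward_D[of n ?y w] Fy by simp
      then show ?thesis
        using w Fy infnorm_pos_le by (intro bexI[of _ "forward.D n ?y w"]) auto
    qed
  qed
  then show ?thesis by blast
qed

lemma unstable_plus_stable: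
  assumes x: "x \<in> I"
  shows "\<exists>u\<in>unstable_space x. \<exists>s\<in>stable_space x. w = u + s"
proof -
  let ?Eu = "unstable_space x" and ?Es = "stable_space x"
  let ?sum = "{u + s |u s. u \<in> ?Eu \<and> s \<in> ?Es}"
  have "\<beta> \<in> P x ` ?Eu" for \<beta>
    using unstable_space_onto[OF x, of \<beta>] by blast
  then have "P x ` ?Eu = UNIV"
    by blast
  then have "DIM('b) \<le> dim ?Eu"
    using dim_image_le[OF linear_P[of x], where S = ?Eu] by simp
  moreover have "1 \<le> dim ?Es"
  proof -
    have "\<not> ?Es \<subseteq> {0}"
      using stable_space_nontrivial[OF x] by blast
    then have "dim ?Es \<noteq> 0"
      by simp
    then show ?thesis
      by linarith
  qed
  moreover have "dim ?sum + dim (?Eu \<inter> ?Es) = dim ?Eu + dim ?Es"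
    by (rule dim_sums_Int[OF backward.subspace_bounded_orbit forward.subspace_bounded_orbit])
  moreover have "dim (?Eu \<inter> ?Es) = 0"
    using stable_Int_unstable[OF x] by (simp add: Int_commute)
  ultimately have "DIM('a) \<le> dim ?sum"
    using dim_split by linarith
  then have "dim ?sum = DIM('a)"
    using dim_subset_UNIV[of ?sum] by linarith
  then have "span ?sum = UNIV"
    by (simp only: dim_eq_full)
  moreover have "span ?sum = ?sum"
    using subspace_sums[OF backward.subspace_bounded_orbit forward.subspace_bounded_orbit] by simp
  ultimately have "w \<in> ?sum"
    by simp
  then show ?thesis
    by blast
qed

theorem unif_hyperbolic_F:
  assumes "compact I"
  shows "unif_hyperbolic F I"
proof -
  have inv_F: "inv F = G"
    by (rule inv_equality) (simp_all add: F_G G_F)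
  have "F ` I = I"
    using F_maps_to G_maps_to F_G by (metis image_subset_iff subsetI subset_antisym image_eqI)
  moreover have "(F ^^ k) differentiable (at x) \<and> (G ^^ k) differentiable (at x)" for k x
    using has_derivative_funpow[OF F_deriv] has_derivative_funpow[OF G_deriv] by (blast intro: differentiableI)
  moreover have "frechet_derivative F (at x) = DF x"
    "frechet_derivative (F ^^ k) (at x) = forward.D k x"
    "frechet_derivative (G ^^ k) (at x) = backward.D k x" for k x
    by (simp_all add: frechet_derivative_at[symmetric] F_deriv has_derivative_funpow G_deriv)
  moreover have "0 < C\<^sup>2 + 1"
    using zero_le_power2[of C] by linarith
  moreover have "0 < 1 / lam" "1 / lam < 1"
    using lam_gt_1 by simp_all
  ultimately show ?thesis
    unfolding unif_hyperbolic_def inv_F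
    using assms forward.subspace_bounded_orbit backward.subspace_bounded_orbit
      stable_Int_unstable unstable_plus_stable stable_space_image unstable_space_image
      forward.bounded_orbit_decay backward.bounded_orbit_decay
    by (intro conjI exI[of _ unstable_space] exI[of _ stable_space] exI[of _ "C\<^sup>2 + 1"]
        exI[of _ "1 / lam"] ballI allI impI) (auto simp: Int_commute)
qed

end

section \<open>The map \<open>H\<close> and its fourth iterate\<close>

lemma has_derivative_vec_nth [derivative_intros]:
  "((\<lambda>x::real^'n. x $ i) has_derivative (\<lambda>v. v $ i)) F"
  by (rule bounded_linear.has_derivative[OF bounded_linear_vec_nth has_derivative_ident])

lemma vector_3_eq_axis:
  "(vector [a, b, c] :: real^3) = a *\<^sub>R axis 1 1 + b *\<^sub>R axis 2 1 + c *\<^sub>R axis 3 1"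
  by (simp add: vec_eq_iff forall_3 axis_def)

lemma has_derivative_vector_3:
  assumes "(f1 has_derivative f1') F" "(f2 has_derivative f2') F" "(f3 has_derivative f3') F"
  shows "((\<lambda>x. vector [f1 x, f2 x, f3 x] :: real^3) has_derivative
    (\<lambda>v. vector [f1' v, f2' v, f3' v])) F"
  unfolding vector_3_eq_axis by (intro has_derivative_add has_derivative_scaleR_left assms)

definition DH :: "real^3 \<Rightarrow> real^3 \<Rightarrow> real^3" where
  "DH p v = vector [-2 * p$2 * v$2 - 0.1 * v$3, v$1, v$2]"

definition H_inv :: "real^3 \<Rightarrow> real^3" where
  "H_inv q = vector [q$2, q$3, 10 * (1.76 - (q$3)^2 - q$1)]"

definition DH_inv :: "real^3 \<Rightarrow> real^3 \<Rightarrow> real^3" where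
  "DH_inv q v = vector [v$2, v$3, -10 * v$1 - 20 * q$3 * v$3]"

lemma H_deriv: "(H has_derivative DH p) (at p)"
  unfolding H_def[abs_def] DH_def
  by (rule has_derivative_vector_3) (auto intro!: derivative_eq_intros)

lemma H_inv_deriv: "(H_inv has_derivative DH_inv p) (at p)"
  unfolding H_inv_def[abs_def] DH_inv_def
  by (rule has_derivative_vector_3) (auto intro!: derivative_eq_intros)

lemma H_H_inv: "H (H_inv q) = q"
  by (simp add: vec_eq_iff forall_3 H_def H_inv_def algebra_simps)

lemma H_inv_H: "H_inv (H q) = q"
  by (simp add: vec_eq_iff forall_3 H_def H_inv_def)

lemma H4_H_inv4: "(H ^^ 4) ((H_inv ^^ 4) q) = q"
  by (rule funpow_left_inverse[of H H_inv, OF H_H_inv])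

lemma H_inv4_H4: "(H_inv ^^ 4) ((H ^^ 4) q) = q"
  by (rule funpow_left_inverse[of H_inv H, OF H_inv_H])

lemma inv_H4: "inv (H ^^ 4) = H_inv ^^ 4"
  by (rule inv_equality) (simp_all add: H4_H_inv4 H_inv4_H4)

lemma bij_H4: "bij (H ^^ 4)"
  by (rule bij_betw_byWitness[of _ "H_inv ^^ 4"]) (simp_all add: H4_H_inv4 H_inv4_H4 surjI[of _ "H_inv ^^ 4"])

lemma H4_components:
  "((H ^^ 4) x)$2 = 1.76 - (1.76 - (x$2)^2 - 0.1 * x$3)^2 - 0.1 * x$1"
  "((H ^^ 4) x)$3 = 1.76 - (x$1)^2 - 0.1 * x$2"
  by (simp_all add: H_def numeral_eq_Suc)

lemma DH4_components:
  "iterate_derivative H DH 4 x v $ 1 =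
    -2 * (1.76 - (x$1)^2 - 0.1 * x$2) * (-2 * x$1 * v$1 - 0.1 * v$2) - 0.1 * (-2 * x$2 * v$2 - 0.1 * v$3)"
  "iterate_derivative H DH 4 x v $ 2 =
    -2 * (1.76 - (x$2)^2 - 0.1 * x$3) * (-2 * x$2 * v$2 - 0.1 * v$3) - 0.1 * v$1"
  "iterate_derivative H DH 4 x v $ 3 = -2 * x$1 * v$1 - 0.1 * v$2"
  by (simp_all add: DH_def H_def numeral_eq_Suc)

section \<open>Cone estimates for \<open>H\<^sup>4\<close>\<close>

definition enclosing_box :: "(real^3) set" where
  "enclosing_box = {p. 0.59 \<le> p$1 \<and> p$1 \<le> 1.03 \<and> 0.84 \<le> p$2 \<and> p$2 \<le> 1.61 \<and>
    0.82 \<le> p$3 \<and> p$3 \<le> 1.13}"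

lemma parallelepiped_coordinates:
  fixes u :: "real^3" and c m :: real
  defines "q \<equiv> vector [0.81, c, 0.975] +
    (vector [vector [0, 0.19, -0.03], vector [m, 0, 0], vector [0, -0.095, -0.06]] :: real^3^3) *v u"
  shows "q$1 = 0.81 + 0.19 * u$2 - 0.03 * u$3" "q$2 = c + m * u$1" "q$3 = 0.975 - 0.095 * u$2 - 0.06 * u$3"
  unfolding q_def by (simp_all add: matrix_vector_mult_def sum_3)

lemma parallelepiped_subset_enclosing_box:
  fixes c m :: real
  assumes "0 \<le> m" "0.84 \<le> c - m" "c + m \<le> 1.61"
  shows "(\<lambda>u. vector [0.81, c, 0.975] +
      (vector [vector [0, 0.19, -0.03], vector [m, 0, 0], vector [0, -0.095, -0.06]] :: real^3^3) *v u)
    ` cubeB \<subseteq> enclosing_box"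
proof
  fix p assume "p \<in> (\<lambda>u. vector [0.81, c, 0.975] +
      (vector [vector [0, 0.19, -0.03], vector [m, 0, 0], vector [0, -0.095, -0.06]] :: real^3^3) *v u)
    ` cubeB"
  then obtain u where u: "\<forall>i. \<bar>u$i\<bar> \<le> 1" and p: "p = vector [0.81, c, 0.975] +
      (vector [vector [0, 0.19, -0.03], vector [m, 0, 0], vector [0, -0.095, -0.06]] :: real^3^3) *v u"
    unfolding cubeB_def by blast
  have "p$1 = 0.81 + 0.19 * u$2 - 0.03 * u$3" "p$2 = c + m * u$1" "p$3 = 0.975 - 0.095 * u$2 - 0.06 * u$3"
    unfolding p by (rule parallelepiped_coordinates)+
  moreover have "\<bar>m * u$1\<bar> \<le> m"
    using u assms(1) by (simp add: abs_mult mult_left_le)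
  moreover have "\<bar>u$2\<bar> \<le> 1" "\<bar>u$3\<bar> \<le> 1"
    using u by auto
  ultimately show "p \<in> enclosing_box"
    using assms unfolding enclosing_box_def by (auto simp: abs_le_iff)
qed

lemma boxes_subset_enclosing_box: "box_a \<union> box_b \<subseteq> enclosing_box"
  unfolding box_a_def box_b_def by (intro Un_least parallelepiped_subset_enclosing_box) simp_all

lemma compact_boxes: "compact (box_a \<union> box_b)"
proof -
  have "cubeB = cbox (-1) 1"
    unfolding cubeB_def by (auto simp: mem_box_cart abs_le_iff)
  then have "compact cubeB"
    by (metis compact_cbox)
  then show ?thesis
    unfolding box_a_def box_b_def
    by (intro compact_Un compact_continuous_image continuous_intros
        matrix_vector_mult_linear_continuous_on)
qed

definition cone_P :: "real^3 \<Rightarrow> real^3 \<Rightarrow> real^2" where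
  "cone_P p v = vector [v$1, p$2 * v$2]"

definition cone_l :: "real^3 \<Rightarrow> real^3 \<Rightarrow> real" where
  "cone_l p v = 5 * (v$3 + v$1 / (2 * p$3))"

lemma infnorm_cone_P: "infnorm (cone_P p v) = max \<bar>v$1\<bar> \<bar>p$2 * v$2\<bar>"
  by (simp add: cone_P_def infnorm_2)

lemma third_component_bound:
  fixes z v1 v3 M :: real
  assumes "0.82 \<le> z" "\<bar>v1\<bar> \<le> M" "\<bar>5 * (v3 + v1 / (2 * z))\<bar> \<le> M"
  shows "\<bar>v3\<bar> \<le> 0.81 * M"
proof -
  define w where "w = v1 / (2 * z)"
  have "\<bar>w\<bar> = \<bar>v1\<bar> / (2 * z)"
    unfolding w_def using assms(1) by simp
  also have "\<dots> \<le> \<bar>v1\<bar> / 1.64"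
    using assms(1) by (intro divide_left_mono) auto
  also have "\<dots> \<le> 0.61 * M"
    using assms(2) by simp
  finally show ?thesis
    using assms(3) unfolding w_def[symmetric] by (simp add: abs_if split: if_splits)
qed

lemma expansion_factor_bound:
  fixes t x1 s :: real
  assumes "0 \<le> t" "x1 \<le> 1.03" "0.84 \<le> s" "s \<le> 1.61" "s = 1.76 - t\<^sup>2 - 0.1 * x1"
  shows "1.05 \<le> s * (3.838 * t - 0.1)"
proof -
  have "0.047 \<le> t\<^sup>2"
    using assms by simp
  have t: "0.2167 \<le> t"
  proof (rule ccontr)
    assume "\<not> 0.2167 \<le> t"
    then have "t * t \<le> 0.2167 * 0.2167"
      using assms(1) by (intro mult_mono) auto
    then show False
      using \<open>0.047 \<le> t\<^sup>2\<close> by (simp add: power2_eq_square)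
  qed
  show ?thesis
  proof (cases "t \<le> 0.4")
    case True
    then have "t * t \<le> 0.4 * 0.4"
      using assms(1) by (intro mult_mono) auto
    then have "1.497 \<le> s"
      using assms by (simp add: power2_eq_square)
    moreover have "0.7316 \<le> 3.838 * t - 0.1"
      using t by simp
    ultimately have "1.497 * 0.7316 \<le> s * (3.838 * t - 0.1)"
      by (intro mult_mono) auto
    then show ?thesis by simp
  next
    case False
    then have "1.4352 \<le> 3.838 * t - 0.1"
      by simp
    then have "0.84 * 1.4352 \<le> s * (3.838 * t - 0.1)"
      using assms by (intro mult_mono) auto
    then show ?thesis by simp
  qed
qed

lemma expansion_estimate:
  fixes x1 x2 x3 h1 h2 h3 v1 v2 v3 d1 d2 d3 d4 :: real
  assumes box: "0.59 \<le> x1" "x1 \<le> 1.03" "0.84 \<le> x2" "0.82 \<le> x3"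
      "0.82 \<le> h2" "h2 \<le> 1.13" "0.84 \<le> h3" "h3 \<le> 1.61"
    and h3: "h3 = 1.76 - h1\<^sup>2 - 0.1 * x1"
    and d1: "d1 = -2 * x2 * v2 - 0.1 * v3" and d2: "d2 = -2 * x1 * v1 - 0.1 * v2"
    and d3: "d3 = -2 * h1 * d1 - 0.1 * v1" and d4: "d4 = -2 * h2 * d2 - 0.1 * d1"
    and cone: "\<bar>5 * (v3 + v1 / (2 * x3))\<bar> \<le> max \<bar>v1\<bar> \<bar>x2 * v2\<bar>"
  shows "21/20 * max \<bar>v1\<bar> \<bar>x2 * v2\<bar> \<le> max \<bar>d4\<bar> \<bar>h3 * d3\<bar>"
proof -
  define N where "N = max \<bar>v1\<bar> \<bar>x2 * v2\<bar>"
  have N: "0 \<le> N" "\<bar>v1\<bar> \<le> N" "\<bar>x2 * v2\<bar> \<le> N"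
    unfolding N_def by auto
  have v3: "\<bar>v3\<bar> \<le> 0.81 * N"
    using third_component_bound[OF box(4) N(2)] cone unfolding N_def by simp
  show ?thesis
  proof (cases "\<bar>x2 * v2\<bar> \<le> \<bar>v1\<bar>")
    case True
    define a b c where "a = x1 * h2 * v1" and "b = h2 * v2" and "c = x2 * v2"
    have "1.9352 * N \<le> \<bar>4 * a\<bar>"
    proof -
      have "0.59 * 0.82 \<le> x1 * h2"
        using box by (intro mult_mono) auto
      then have "(0.59 * 0.82) * \<bar>v1\<bar> \<le> (x1 * h2) * \<bar>v1\<bar>"
        by (intro mult_right_mono) auto
      then show ?thesis
        using box True unfolding N_def a_def by (simp add: abs_mult)
    qed
    moreover have "\<bar>b\<bar> \<le> 1.13 / 0.84 * N"
    proof -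
      have "\<bar>v2\<bar> * 0.84 \<le> \<bar>v2\<bar> * x2"
        using box by (intro mult_left_mono) auto
      moreover have "\<bar>b\<bar> = h2 * \<bar>v2\<bar>"
        using box unfolding b_def by (simp add: abs_mult)
      moreover have "h2 * \<bar>v2\<bar> \<le> 1.13 * \<bar>v2\<bar>"
        using box by (intro mult_right_mono) auto
      ultimately show ?thesis
        using N(3) box by (simp add: abs_mult field_simps)
    qed
    moreover have "\<bar>c\<bar> \<le> N"
      unfolding c_def by (rule N(3))
    moreover have "d4 = 4 * a + 0.2 * b + 0.2 * c + 0.01 * v3"
      unfolding a_def b_def c_def d4 d2 d1 by (simp add: algebra_simps)
    ultimately have "21/20 * N \<le> \<bar>d4\<bar>"
      using N(1) v3 by (simp add: abs_if split: if_splits)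
    then show ?thesis
      unfolding N_def by linarith
  next
    case False
    define t a b where "t = \<bar>h1\<bar>" and "a = h1 * (x2 * v2)" and "b = h1 * v3"
    have "\<bar>4 * a\<bar> = 4 * t * N"
      using False unfolding t_def a_def N_def by (simp add: abs_mult)
    moreover have "\<bar>b\<bar> \<le> t * (0.81 * N)"
      unfolding t_def b_def abs_mult using v3 by (intro mult_left_mono) auto
    moreover have "d3 = 4 * a + 0.2 * b - 0.1 * v1"
      unfolding a_def b_def d3 d1 by (simp add: algebra_simps)
    ultimately have d3_bound: "(3.838 * t - 0.1) * N \<le> \<bar>d3\<bar>"
      using N(2) by (simp add: abs_if algebra_simps split: if_splits)
    have "1.05 \<le> h3 * (3.838 * t - 0.1)"
      using expansion_factor_bound[of t x1 h3] box h3 unfolding t_def by simp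
    then have "1.05 * N \<le> h3 * (3.838 * t - 0.1) * N"
      using N(1) by (intro mult_right_mono) auto
    also have "\<dots> \<le> \<bar>h3 * d3\<bar>"
      using d3_bound box by (simp add: abs_mult mult_left_mono mult.assoc)
    finally show ?thesis
      unfolding N_def by (simp add: le_max_iff_disj)
  qed
qed

lemma contraction_estimate:
  fixes x2 x3 h2 v1 v2 v3 d1 d2 d4 :: real
  assumes box: "0.82 \<le> x3" "0.82 \<le> h2"
    and d1: "d1 = -2 * x2 * v2 - 0.1 * v3" and d4: "d4 = -2 * h2 * d2 - 0.1 * d1"
  shows "21/20 * \<bar>5 * (d2 + d4 / (2 * h2))\<bar> \<le>
    max (max \<bar>v1\<bar> \<bar>x2 * v2\<bar>) \<bar>5 * (v3 + v1 / (2 * x3))\<bar>"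
proof -
  define M where "M = max (max \<bar>v1\<bar> \<bar>x2 * v2\<bar>) \<bar>5 * (v3 + v1 / (2 * x3))\<bar>"
  define q where "q = 5 * (d2 + d4 / (2 * h2))"
  have M: "0 \<le> M" "\<bar>v1\<bar> \<le> M" "\<bar>x2 * v2\<bar> \<le> M" "\<bar>5 * (v3 + v1 / (2 * x3))\<bar> \<le> M"
    unfolding M_def by auto
  have "\<bar>v3\<bar> \<le> 0.81 * M"
    by (rule third_component_bound[OF box(1) M(2,4)])
  moreover have "d1 = -2 * (x2 * v2) - 0.1 * v3"
    unfolding d1 by simp
  ultimately have "\<bar>d1\<bar> \<le> 2081 / 1000 * M"
    using M(3) by (simp add: abs_if split: if_splits del: mult_minus_left)
  moreover have "\<bar>q\<bar> * (4 * h2) = \<bar>d1\<bar>"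
  proof -
    \<comment> \<open>the \<open>d2\<close>-terms cancel\<close>
    have "q * (4 * h2) = - d1"
      using box(2) unfolding q_def d4 by (simp add: field_simps)
    moreover have "\<bar>q\<bar> * (4 * h2) = \<bar>q * (4 * h2)\<bar>"
      using box(2) by (simp add: abs_mult)
    ultimately show ?thesis
      by simp
  qed
  moreover have "\<bar>q\<bar> * (328 / 100) \<le> \<bar>q\<bar> * (4 * h2)"
    using box(2) by (intro mult_left_mono) auto
  ultimately show ?thesis
    using M(1) unfolding M_def[symmetric] q_def[symmetric] by linarith
qed

lemma norm_le_cone_max:
  assumes "p \<in> enclosing_box"
  shows "norm v \<le> 9 * max (infnorm (cone_P p v)) \<bar>cone_l p v\<bar>"
proof -
  define M where "M = max (infnorm (cone_P p v)) \<bar>cone_l p v\<bar>"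
  have p: "0.84 \<le> p$2" "0.82 \<le> p$3"
    using assms by (simp_all add: enclosing_box_def)
  have M: "\<bar>v$1\<bar> \<le> M" "\<bar>p$2 * v$2\<bar> \<le> M" "\<bar>5 * (v$3 + v$1 / (2 * p$3))\<bar> \<le> M"
    unfolding M_def infnorm_cone_P cone_l_def by auto
  have "\<bar>v$2\<bar> * 0.84 \<le> \<bar>v$2\<bar> * p$2"
    using p by (intro mult_left_mono) auto
  also have "\<dots> = \<bar>p$2 * v$2\<bar>"
    using p by (simp add: abs_mult)
  finally have "\<bar>v$2\<bar> * 0.84 \<le> M"
    using M(2) by linarith
  moreover have "\<bar>v$3\<bar> \<le> 0.81 * M"
    by (rule third_component_bound[OF p(2) M(1,3)])
  moreover have "norm v \<le> \<bar>v$1\<bar> + \<bar>v$2\<bar> + \<bar>v$3\<bar>"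
    using norm_le_l1_cart[of v] by (simp add: sum_3)
  ultimately show ?thesis
    using M(1) unfolding M_def[symmetric] by simp
qed

lemma cone_P_le_norm:
  assumes "p \<in> enclosing_box"
  shows "infnorm (cone_P p v) \<le> 9 * norm v"
proof -
  have p: "0 \<le> p$2" "p$2 \<le> 1.61"
    using assms by (simp_all add: enclosing_box_def)
  have "\<bar>p$2 * v$2\<bar> = p$2 * \<bar>v$2\<bar>"
    using p by (simp add: abs_mult)
  also have "\<dots> \<le> 1.61 * norm v"
    using p component_le_norm_cart[of v 2] by (intro mult_mono) auto
  also have "\<dots> \<le> 9 * norm v"
    by (intro mult_right_mono) auto
  moreover have "\<bar>v$1\<bar> \<le> 9 * norm v"
    using component_le_norm_cart[of v 1] norm_ge_zero[of v] by linarith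
  ultimately show ?thesis
    by (simp add: infnorm_cone_P)
qed

lemma cone_l_le_norm:
  assumes "p \<in> enclosing_box"
  shows "\<bar>cone_l p v\<bar> \<le> 9 * norm v"
proof -
  define w where "w = v$1 / (2 * p$3)"
  have p: "0.82 \<le> p$3"
    using assms by (simp add: enclosing_box_def)
  have "\<bar>w\<bar> = \<bar>v$1\<bar> / (2 * p$3)"
    unfolding w_def using p by simp
  also have "\<dots> \<le> \<bar>v$1\<bar> / 1.64"
    using p by (intro divide_left_mono) auto
  also have "\<dots> \<le> 61 / 100 * norm v"
    using component_le_norm_cart[of v 1] by simp
  finally have "\<bar>w\<bar> \<le> 61 / 100 * norm v" .
  moreover have "\<bar>cone_l p v\<bar> \<le> 5 * \<bar>v$3\<bar> + 5 * \<bar>w\<bar>"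
    unfolding cone_l_def w_def[symmetric] using abs_triangle_ineq[of "v$3" w] by (simp add: abs_mult)
  ultimately show ?thesis
    using component_le_norm_cart[of v 3] by linarith
qed

lemma expanding_cone_H4:
  assumes "x \<in> enclosing_box" "(H ^^ 4) x \<in> enclosing_box"
    and "\<bar>cone_l x v\<bar> \<le> infnorm (cone_P x v)"
  shows "21/20 * infnorm (cone_P x v) \<le>
    infnorm (cone_P ((H ^^ 4) x) (iterate_derivative H DH 4 x v))"
  unfolding infnorm_cone_P
  by (rule expansion_estimate[where ?x1.0 = "x$1" and ?x3.0 = "x$3"
        and ?h1.0 = "1.76 - (x$2)\<^sup>2 - 0.1 * x$3" and ?h2.0 = "1.76 - (x$1)\<^sup>2 - 0.1 * x$2"
        and ?d1.0 = "-2 * x$2 * v$2 - 0.1 * v$3" and ?d2.0 = "-2 * x$1 * v$1 - 0.1 * v$2"])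
    (use assms in \<open>simp_all add: enclosing_box_def H4_components DH4_components infnorm_cone_P cone_l_def\<close>)

lemma contracting_cone_H4:
  assumes "x \<in> enclosing_box" "(H ^^ 4) x \<in> enclosing_box"
  shows "21/20 * \<bar>cone_l ((H ^^ 4) x) (iterate_derivative H DH 4 x v)\<bar> \<le>
    max (infnorm (cone_P x v)) \<bar>cone_l x v\<bar>"
  unfolding infnorm_cone_P cone_l_def
  by (rule contraction_estimate[where ?d1.0 = "-2 * x$2 * v$2 - 0.1 * v$3"])
    (use assms in \<open>simp_all add: enclosing_box_def H4_components DH4_components\<close>)

lemma linear_cone_P: "linear (cone_P p)"
  by (intro linearI) (simp_all add: cone_P_def vec_eq_iff forall_2 algebra_simps)

lemma linear_cone_l: "linear (cone_l p)"
  by (intro linearI) (simp_all add: cone_l_def algebra_simps add_divide_distrib)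

lemma cone_hyperbolic_H4:
  "cone_hyperbolic (H ^^ 4) (H_inv ^^ 4) (iterate_derivative H DH 4) (iterate_derivative H_inv DH_inv 4)
    (Inv (H ^^ 4) (box_a \<union> box_b)) cone_P cone_l (21/20) 9"
proof (rule cone_hyperbolic.intro)
  let ?I = "Inv (H ^^ 4) (box_a \<union> box_b)"
  fix x v
  show "(H ^^ 4) ((H_inv ^^ 4) x) = x" "(H_inv ^^ 4) ((H ^^ 4) x) = x"
    by (rule H4_H_inv4 H_inv4_H4)+
  show "((H ^^ 4) has_derivative iterate_derivative H DH 4 x) (at x)"
    by (rule has_derivative_funpow[OF H_deriv])
  show "((H_inv ^^ 4) has_derivative iterate_derivative H_inv DH_inv 4 x) (at x)"
    by (rule has_derivative_funpow[OF H_inv_deriv])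
  show "linear (cone_P x)" "linear (cone_l x)"
    by (rule linear_cone_P linear_cone_l)+
  show "DIM(real^2) + 1 = DIM(real^3)" "1 < (21/20 :: real)"
    by simp_all
  assume x: "x \<in> ?I"
  show F_x: "(H ^^ 4) x \<in> ?I"
    by (rule f_in_Inv[OF bij_H4 x])
  show "(H_inv ^^ 4) x \<in> ?I"
    using inv_in_Inv[OF bij_H4 x] by (simp add: inv_H4)
  have box: "x \<in> enclosing_box" "(H ^^ 4) x \<in> enclosing_box"
    using subsetD[OF order_trans[OF Inv_subset boxes_subset_enclosing_box]] x F_x by auto
  show "norm v \<le> 9 * max (infnorm (cone_P x v)) \<bar>cone_l x v\<bar>"
    "infnorm (cone_P x v) \<le> 9 * norm v" "\<bar>cone_l x v\<bar> \<le> 9 * norm v"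
    by (rule norm_le_cone_max[OF box(1)] cone_P_le_norm[OF box(1)] cone_l_le_norm[OF box(1)])+
  show "\<bar>cone_l x v\<bar> \<le> infnorm (cone_P x v) \<Longrightarrow>
      21/20 * infnorm (cone_P x v) \<le> infnorm (cone_P ((H ^^ 4) x) (iterate_derivative H DH 4 x v))"
    by (rule expanding_cone_H4[OF box])
  show "21/20 * \<bar>cone_l ((H ^^ 4) x) (iterate_derivative H DH 4 x v)\<bar> \<le>
      max (infnorm (cone_P x v)) \<bar>cone_l x v\<bar>"
    by (rule contracting_cone_H4[OF box])
qed

lemma continuous_on_H: "continuous_on UNIV H"
  by (rule has_derivative_continuous_on[of UNIV H DH]) (simp add: H_deriv)

lemma continuous_on_H_inv: "continuous_on UNIV H_inv"
  by (rule has_derivative_continuous_on[of UNIV H_inv DH_inv]) (simp add: H_inv_deriv)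

theorem theorem4p4:
  shows "unif_hyperbolic (H ^^ 4) (Inv (H ^^ 4) (box_a \<union> box_b))"
proof (rule cone_hyperbolic.unif_hyperbolic_F[OF cone_hyperbolic_H4])
  show "compact (Inv (H ^^ 4) (box_a \<union> box_b))"
    using compact_boxes continuous_on_funpow[OF continuous_on_H] continuous_on_funpow[OF continuous_on_H_inv]
    by (intro compact_Inv) (simp_all add: inv_H4)
qed

end
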